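(* Let $\alpha,\gamma\in(0,1)$ and let $S:[0,1)^2\to[0,1)^2$ be $$S(x,y)=\begin{cases}(x+\alpha \bmod 1,\ y) & \text{if } x\in[0,1-\alpha),\\ (x+\alpha\bmod 1,\ y+\gamma\bmod 1) & \text{if } x\in[1-\alpha,1).\end{cases}$$ If the three numbers $1,\alpha,\alpha\gamma$ are linearly independent over $\mathbb Q$, then for every $(x_0,y_0)\in[0,1)^2$ the set $\{S^n(x_0,y_0):n\in\mathbb N\}$ is dense in $[0,1)^2$. *)

theory Defs
  imports "HOL-Analysis.Analysis"
begin

definition skewS :: "real \<Rightarrow> real \<Rightarrow> real \<times> real \<Rightarrow> real \<times> real" where
  "skewS \<alpha> \<gamma> p = (let x = fst p; y = snd p in
     if x < 1 - \<alpha> then (frac (x + \<alpha>), y)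
     else (frac (x + \<alpha>), frac (y + \<gamma>)))"

definition lin_indep_Q3 :: "real \<Rightarrow> real \<Rightarrow> real \<Rightarrow> bool" where
  "lin_indep_Q3 a b c \<longleftrightarrow>
     (\<forall>p q r. p \<in> \<rat> \<and> q \<in> \<rat> \<and> r \<in> \<rat> \<and> p * a + q * b + r * c = 0 \<longrightarrow> p = 0 \<and> q = 0 \<and> r = 0)"

end

theory Submission
  imports Defs
begin

text \<open>Along an orbit the first coordinate is the rotation \<open>x + n\<alpha>\<close> mod 1, while the second
  coordinate advances by \<open>\<gamma>\<close> each time the rotation wraps around, i.e. by \<open>\<gamma>\<lfloor>x + n\<alpha>\<rfloor>\<close> in total.
  Modulo small errors, prescribing \<open>(x + n\<alpha>, y + \<gamma>\<lfloor>x + n\<alpha>\<rfloor>)\<close> mod 1 therefore amounts to prescribing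
  \<open>n\<alpha>\<close> and \<open>n\<alpha>\<gamma>\<close> mod 1, which Kronecker's simultaneous approximation theorem allows because
  \<open>1, \<alpha>, \<alpha>\<gamma>\<close> are independent over \<open>\<rat>\<close>.\<close>

lemma lin_indep_Q3_distinct:
  assumes "lin_indep_Q3 a b c"
  shows "a \<noteq> b" "a \<noteq> c" "b \<noteq> c"
proof -
  have "\<not> (p * a + q * b + r * c = 0)" if "p \<in> \<rat>" "q \<in> \<rat>" "r \<in> \<rat>" "p \<noteq> 0 \<or> q \<noteq> 0" for p q r
    using assms that unfolding lin_indep_Q3_def by blast
  from this[of 1 "-1" 0] this[of 1 0 "-1"] this[of 0 1 "-1"]
  show "a \<noteq> b" "a \<noteq> c" "b \<noteq> c" by auto
qed

lemma lin_indep_Q3_independent: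
  assumes li: "lin_indep_Q3 a b c"
  shows "module.independent (\<lambda>r x. of_int r * x) {a, b, c}"
proof -
  interpret Modules.module "\<lambda>r. (*) (real_of_int r)"
    by (simp add: Modules.module.intro distrib_left mult.commute)
  note distinct = lin_indep_Q3_distinct[OF li]
  show ?thesis
    unfolding independent_explicit_module
  proof (intro allI impI)
    fix t u v
    assume "finite t" and t: "t \<subseteq> {a, b, c}"
      and zero: "(\<Sum>v\<in>t. real_of_int (u v) * v) = 0" and "v \<in> t"
    define w where "w z = (if z \<in> t then u z else 0)" for z
    have "(\<Sum>v\<in>t. real_of_int (u v) * v) = (\<Sum>z\<in>{a, b, c}. real_of_int (w z) * z)"
      by (rule sum.mono_neutral_cong_left) (use t in \<open>auto simp: w_def\<close>)
    also have "\<dots> = real_of_int (w a) * a + real_of_int (w b) * b + real_of_int (w c) * c"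
      using distinct by (simp add: algebra_simps)
    finally have "w a = 0 \<and> w b = 0 \<and> w c = 0"
      using li zero unfolding lin_indep_Q3_def by (metis Rats_of_int of_int_eq_0_iff)
    then show "u v = 0" using \<open>v \<in> t\<close> t by (auto simp: w_def)
  qed
qed

text \<open>Kronecker's theorem with a positive multiplier: the integer multiplier \<open>k\<close> it provides is
  shifted by \<open>L q\<close>, where \<open>q > 0\<close> is a Dirichlet denominator putting every \<open>q \<theta> i\<close> within \<open>1/N\<close>
  of an integer, so that the shift costs at most \<open>L/N\<close>.\<close>

lemma Kronecker_thm_2_nat:
  fixes \<alpha> \<theta> :: "nat \<Rightarrow> real" and n :: nat
  assumes indp: "module.independent (\<lambda>r x. of_int r * x) (\<theta> ` {..n})"
    and inj: "inj_on \<theta> {..n}" and "\<theta> n = 1" and "\<epsilon> > 0"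
  obtains k :: nat and m where "\<And>i. i < n \<Longrightarrow> \<bar>real k * \<theta> i - of_int (m i) - \<alpha> i\<bar> < \<epsilon>"
proof -
  obtain k m where km: "\<And>i. i < n \<Longrightarrow> \<bar>of_int k * \<theta> i - of_int (m i) - \<alpha> i\<bar> < \<epsilon>/2"
    using Kronecker_thm_2[OF indp inj] assms(3,4) half_gt_zero by metis
  define L :: nat where "L = nat \<bar>k\<bar> + 1"
  define N :: nat where "N = nat \<lceil>2 * L / \<epsilon>\<rceil> + 1"
  have "N > 0" by (simp add: N_def)
  have "2 * L / \<epsilon> < N" unfolding N_def by linarith
  then have LN: "real L * (1 / N) < \<epsilon>/2"
    using \<open>\<epsilon> > 0\<close> \<open>N > 0\<close> by (simp add: field_simps)
  obtain q p where "0 < q" and qp: "\<And>i. i < n \<Longrightarrow> \<bar>of_int q * \<theta> i - of_int (p i)\<bar> < 1 / N"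
    using Dirichlet_approx_simult[OF \<open>N > 0\<close>] by metis
  have "int L \<le> int L * q" using \<open>0 < q\<close> mult_left_mono[of 1 q "int L"] by simp
  then have "k + int L * q > 0" unfolding L_def by linarith
  then have kL: "real (nat (k + int L * q)) = of_int k + real L * of_int q" by simp
  show thesis
  proof (rule that[of "nat (k + int L * q)" "\<lambda>i. m i + int L * p i"])
    fix i assume "i < n"
    have "\<bar>real L * (of_int q * \<theta> i - of_int (p i))\<bar> \<le> real L * (1 / N)"
      using mult_left_mono[OF less_imp_le[OF qp[OF \<open>i < n\<close>]], of "real L"] by (simp add: abs_mult)
    moreover have "real (nat (k + int L * q)) * \<theta> i - of_int (m i + int L * p i) - \<alpha> i
        = (of_int k * \<theta> i - of_int (m i) - \<alpha> i) + real L * (of_int q * \<theta> i - of_int (p i))"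
      unfolding kL by (simp add: algebra_simps)
    ultimately show "\<bar>real (nat (k + int L * q)) * \<theta> i - of_int (m i + int L * p i) - \<alpha> i\<bar> < \<epsilon>"
      using km[OF \<open>i < n\<close>] LN by linarith
  qed
qed

lemma lin_indep_Q3_simultaneous_approx:
  fixes \<alpha> \<beta> A B \<delta> :: real
  assumes li: "lin_indep_Q3 1 \<alpha> \<beta>" and "\<delta> > 0"
  obtains n :: nat and m1 m2 :: int
    where "\<bar>real n * \<alpha> - of_int m1 - A\<bar> < \<delta>" "\<bar>real n * \<beta> - of_int m2 - B\<bar> < \<delta>"
proof -
  define \<theta> :: "nat \<Rightarrow> real" where "\<theta> = (\<lambda>i. if i = 0 then \<alpha> else if i = 1 then \<beta> else 1)"
  note distinct = lin_indep_Q3_distinct[OF li]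
  have img: "\<theta> ` {..2} = {1, \<alpha>, \<beta>}"
    by (auto simp: \<theta>_def atMost_nat_numeral)
  have "inj_on \<theta> {..2}"
    using distinct by (auto simp: inj_on_def \<theta>_def atMost_nat_numeral)
  moreover have "module.independent (\<lambda>r x. of_int r * x) (\<theta> ` {..2})"
    unfolding img by (rule lin_indep_Q3_independent[OF li])
  moreover have "\<theta> 2 = 1" by (simp add: \<theta>_def)
  ultimately obtain n :: nat and m
    where "\<And>i. i < 2 \<Longrightarrow> \<bar>real n * \<theta> i - of_int (m i) - (if i = 0 then A else B)\<bar> < \<delta>"
    using Kronecker_thm_2_nat[where \<alpha>="\<lambda>i. if i = 0 then A else B"] \<open>\<delta> > 0\<close> by blast
  from this[of 0] this[of 1] show thesis
    by (intro that[of n "m 0" "m 1"]) (auto simp: \<theta>_def)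
qed

lemma skewS_iterate:
  assumes "0 \<le> x" "x < 1" "0 \<le> y" "y < 1" "0 < \<alpha>" "\<alpha> < 1"
  shows "(skewS \<alpha> \<gamma> ^^ n) (x, y) = (frac (x + real n * \<alpha>), frac (y + \<gamma> * of_int \<lfloor>x + real n * \<alpha>\<rfloor>))"
proof (induction n)
  case 0
  have "\<lfloor>x\<rfloor> = 0" using assms by (simp add: floor_eq_iff)
  then show ?case using assms by (simp add: frac_eq)
next
  case (Suc n)
  define t where "t = frac (x + real n * \<alpha>)"
  define f where "f = \<lfloor>x + real n * \<alpha>\<rfloor>"
  have "0 \<le> t" "t < 1" unfolding t_def by (auto simp: frac_lt_1)
  have step: "x + real (Suc n) * \<alpha> = of_int f + (t + \<alpha>)"
    unfolding t_def f_def frac_def by (simp add: algebra_simps)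
  have frac_step: "frac (x + real (Suc n) * \<alpha>) = frac (t + \<alpha>)"
    unfolding step by simp
  have orbit: "(skewS \<alpha> \<gamma> ^^ Suc n) (x, y) = skewS \<alpha> \<gamma> (t, frac (y + \<gamma> * of_int f))"
    using Suc.IH by (simp add: t_def f_def)
  show ?case
  proof (cases "t < 1 - \<alpha>")
    case True
    then have "\<lfloor>x + real (Suc n) * \<alpha>\<rfloor> = f"
      unfolding step using \<open>0 \<le> t\<close> assms by (simp add: floor_eq_iff)
    then show ?thesis using True frac_step unfolding orbit by (simp add: skewS_def)
  next
    case False
    then have "\<lfloor>x + real (Suc n) * \<alpha>\<rfloor> = f + 1"
      unfolding step using \<open>t < 1\<close> assms by (simp add: floor_eq_iff)
    moreover have "frac (frac (y + \<gamma> * of_int f) + \<gamma>) = frac (y + \<gamma> * of_int (f + 1))"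
      by (simp add: algebra_simps)
    ultimately show ?thesis using False frac_step unfolding orbit by (simp add: skewS_def)
  qed
qed

lemma floor_frac_of_int_add:
  assumes "0 \<le> u" "u < 1"
  shows "\<lfloor>of_int m + u\<rfloor> = m" "frac (of_int m + u) = u"
  using assms by (simp_all add: floor_eq_iff frac_eq)

lemma dist_Pair_le_sum_abs: "dist (a, b) (c, d) \<le> \<bar>a - c\<bar> + \<bar>b - (d::real)\<bar>"
  using sqrt_sum_squares_le_sum_abs[of "a - c" "b - d"] by (simp add: dist_Pair_Pair dist_real_def)

lemma skewS_orbit_approaches:
  fixes \<alpha> \<gamma> x0 y0 a b e :: real
  assumes "0 < \<alpha>" "\<alpha> < 1" "0 < \<gamma>" "\<gamma> < 1" and li: "lin_indep_Q3 1 \<alpha> (\<alpha> * \<gamma>)"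
    and "x0 \<in> {0..<1}" "y0 \<in> {0..<1}" "a \<in> {0<..<1}" "b \<in> {0<..<1}" "e > 0"
  shows "\<exists>n. dist ((skewS \<alpha> \<gamma> ^^ n) (x0, y0)) (a, b) < e"
proof -
  define \<delta> where "\<delta> = min (min a (1 - a)) (min (min b (1 - b)) e) / 3"
  have "\<delta> > 0" using assms unfolding \<delta>_def by simp
  have \<delta>_le: "3 * \<delta> \<le> a" "3 * \<delta> \<le> 1 - a" "3 * \<delta> \<le> b" "3 * \<delta> \<le> 1 - b" "3 * \<delta> \<le> e"
    unfolding \<delta>_def by auto
  \<comment> \<open>As \<open>\<lfloor>x0 + n\<alpha>\<rfloor> = x0 + n\<alpha> - a - r\<close>, the second coordinate of the \<open>n\<close>-th point is
    \<open>y0 + \<gamma> x0 - \<gamma> a + n\<alpha>\<gamma> - \<gamma> r\<close> mod 1; this dictates the target for \<open>n\<alpha>\<gamma>\<close>.\<close>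
  obtain n m1 m2 where
    approx_x: "\<bar>real n * \<alpha> - of_int m1 - (a - x0)\<bar> < \<delta>"
    and approx_y: "\<bar>real n * (\<alpha> * \<gamma>) - of_int m2 - (b - y0 - \<gamma> * x0 + \<gamma> * a)\<bar> < \<delta>"
    using lin_indep_Q3_simultaneous_approx[OF li \<open>\<delta> > 0\<close>] by metis
  define r where "r = real n * \<alpha> - of_int m1 - (a - x0)"
  define s where "s = real n * (\<alpha> * \<gamma>) - of_int m2 - (b - y0 - \<gamma> * x0 + \<gamma> * a)"
  have "\<bar>\<gamma> * r\<bar> \<le> \<bar>r\<bar>"
    using assms(3,4) by (simp add: abs_mult mult_left_le_one_le)
  then have a_err: "\<bar>r\<bar> < \<delta>" and b_err: "\<bar>s - \<gamma> * r\<bar> < 2 * \<delta>"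
    using approx_x approx_y unfolding r_def s_def by linarith+
  have x_bounds: "0 \<le> a + r" "a + r < 1" and y_bounds: "0 \<le> b + (s - \<gamma> * r)" "b + (s - \<gamma> * r) < 1"
    using a_err b_err \<delta>_le by (simp_all add: abs_less_iff)
  have x_split: "x0 + real n * \<alpha> = of_int m1 + (a + r)"
    and y_split: "y0 + \<gamma> * of_int m1 = of_int m2 + (b + (s - \<gamma> * r))"
    unfolding r_def s_def by (simp_all add: algebra_simps)
  have "(skewS \<alpha> \<gamma> ^^ n) (x0, y0)
      = (frac (x0 + real n * \<alpha>), frac (y0 + \<gamma> * of_int \<lfloor>x0 + real n * \<alpha>\<rfloor>))"
    using assms(1,2,6,7) by (simp add: skewS_iterate)
  also have "\<dots> = (a + r, b + (s - \<gamma> * r))"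
    by (simp only: x_split floor_frac_of_int_add[OF x_bounds] y_split floor_frac_of_int_add[OF y_bounds])
  moreover have "dist (a + r, b + (s - \<gamma> * r)) (a, b) < e"
    using dist_Pair_le_sum_abs[of "a + r" "b + (s - \<gamma> * r)" a b] a_err b_err \<delta>_le
    by linarith
  ultimately show ?thesis by metis
qed

theorem proposition2:
  fixes \<alpha> \<gamma> x0 y0 :: real
  assumes "0 < \<alpha>" "\<alpha> < 1" "0 < \<gamma>" "\<gamma> < 1"
    and "lin_indep_Q3 1 \<alpha> (\<alpha> * \<gamma>)"
    and "x0 \<in> {0..<1}" "y0 \<in> {0..<1}"
  shows "{0..<1} \<times> {0..<1} \<subseteq> closure {(skewS \<alpha> \<gamma> ^^ n) (x0, y0) | n :: nat. True}"
proof -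
  let ?orbit = "{(skewS \<alpha> \<gamma> ^^ n) (x0, y0) | n :: nat. True}"
  have "{0<..<1} \<times> {0<..<1} \<subseteq> closure ?orbit"
  proof (clarify intro!: iffD2[OF closure_approachable] allI impI)
    fix a b e :: real assume "a \<in> {0<..<1}" "b \<in> {0<..<1}" "0 < e"
    then obtain n where "dist ((skewS \<alpha> \<gamma> ^^ n) (x0, y0)) (a, b) < e"
      using skewS_orbit_approaches[OF assms] by blast
    then show "\<exists>p\<in>?orbit. dist p (a, b) < e" by blast
  qed
  then have "closure ({0<..<1} \<times> {0<..<1}) \<subseteq> closure ?orbit"
    by (simp add: closure_minimal)
  moreover have "{0..<1} \<times> {0..<1} \<subseteq> closure ({0<..<(1::real)} \<times> {0<..<(1::real)})"
    by (auto simp: closure_Times)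
  ultimately show ?thesis by blast
qed

end
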